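(* Let $\mathcal{L}=\{L_1,L_2,\dots\}$ be a countably infinite collection of infinite languages such that $|L_a\cap L_b|<\infty$ for all $a\ne b$. Then for every $\varepsilon>0$ there is an online randomized identification algorithm (which may use the function $M(k)=\max_{1\le a<b\le k}|L_a\cap L_b|$, $M(1)=0$, and membership queries) that is $\varepsilon$-DP in the continual release model and that, for every $K\in\mathcal{L}$ and every enumeration of $K$ without repetitions, with probability $1$ outputs an index $i_n$ with $L_{i_n}=K$, and the same index, for all sufficiently large $n$.
   Context: $\mathcal{X}$ is a countable universe; a language is an infinite subset of $\mathcal{X}$. An enumeration of $K$ without repetitions is a sequence $x_1,x_2,\dots$ of pairwise distinct elements of $K$ in which every element of $K$ appears. An online randomized identification algorithm, after seeing $x_{1:n}$, outputs an index $i_n$ depending only on $x_{1:n}$ and internal randomness. Streams are neighboring if they differ at exactly one time step (arbitrary streams over $\mathcal{X}$, not necessarily enumerations); the algorithm is $\varepsilon$-DP in the continual release model if for all neighboring input streams $x,x'$ and every measurable set $E$ of entire output sequences, $\Pr[(i_n)_n(x)\in E]\le e^\varepsilon\Pr[(i_n)_n(x')\in E]$. *)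

theory Defs
  imports "HOL-Probability.Probability"
begin

text \<open>Streams are maps nat => 'a; position t (0-based) is time step t+1.
  The prefix x_{1:n+1} seen after n+1 steps.\<close>
definition prefix :: "(nat \<Rightarrow> 'a) \<Rightarrow> nat \<Rightarrow> 'a list" where
  "prefix x n = map x [0..<Suc n]"

definition neighboring :: "(nat \<Rightarrow> 'a) \<Rightarrow> (nat \<Rightarrow> 'a) \<Rightarrow> bool" where
  "neighboring x x' \<longleftrightarrow> (\<exists>t. x t \<noteq> x' t \<and> (\<forall>n. n \<noteq> t \<longrightarrow> x n = x' n))"

definition enumeration_of :: "(nat \<Rightarrow> 'a) \<Rightarrow> 'a set \<Rightarrow> bool" where
  "enumeration_of x K \<longleftrightarrow> inj x \<and> range x = K"

text \<open>Online randomized algorithm: A maps the prefix seen so far and the internal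
  randomness r (drawn from probability space R) to an index.\<close>
definition output_seq :: "('a list \<Rightarrow> 'r \<Rightarrow> nat) \<Rightarrow> (nat \<Rightarrow> 'a) \<Rightarrow> 'r \<Rightarrow> (nat \<Rightarrow> nat)" where
  "output_seq A x r = (\<lambda>n. A (prefix x n) r)"

abbreviation out_space :: "(nat \<Rightarrow> nat) measure" where
  "out_space \<equiv> PiM UNIV (\<lambda>_. count_space UNIV)"

definition online_randomized_alg :: "'r measure \<Rightarrow> ('a list \<Rightarrow> 'r \<Rightarrow> nat) \<Rightarrow> bool" where
  "online_randomized_alg R A \<longleftrightarrow> prob_space R \<and>
     (\<forall>xs. (\<lambda>r. A xs r) \<in> measurable R (count_space UNIV))"

definition dp_continual :: "real \<Rightarrow> 'r measure \<Rightarrow> ('a list \<Rightarrow> 'r \<Rightarrow> nat) \<Rightarrow> bool" where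
  "dp_continual \<epsilon> R A \<longleftrightarrow>
     (\<forall>x x' E. neighboring x x' \<longrightarrow> E \<in> sets out_space \<longrightarrow>
        measure (distr R out_space (output_seq A x)) E
          \<le> exp \<epsilon> * measure (distr R out_space (output_seq A x')) E)"

end

theory Submission
  imports Defs
begin

(* Randomized response. Time steps are shared among the languages by the Cantor pairing:
   step prod_encode (a, m) is the m-th test "is the element arriving now in L a?", and its
   answer is published after being flipped with probability p = 1 / (1 + e^\<epsilon>). Every stream
   element influences a single published bit, whose two conditional laws differ by a factor
   at most e^\<epsilon>, so any post-processing of the published bits is \<epsilon>-DP in the continual
   release model. The algorithm outputs the least index whose tests so far received a strict
   majority of "yes". On an enumeration of L i every test of L i is truly positive, so by
   Hoeffding's inequality and Borel-Cantelli its "yes" frequency eventually exceeds 1/2;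
   for a \<noteq> i only the finitely many elements of L a \<inter> L i are truly positive, so the "yes"
   frequency of L a is eventually below 1/2. *)

section \<open>Biased coin flips\<close>

definition coin :: "real \<Rightarrow> real measure" where
  "coin p = measure_pmf (map_pmf (\<lambda>b. if b then 1 else 0) (bernoulli_pmf p))"

definition coin_flips :: "real \<Rightarrow> (nat \<Rightarrow> real) measure" where
  "coin_flips p = PiM UNIV (\<lambda>_. coin p)"

lemma prob_space_coin: "prob_space (coin p)"
  unfolding coin_def by (rule prob_space_measure_pmf)

lemma sets_coin [simp]: "sets (coin p) = UNIV"
  and space_coin [simp]: "space (coin p) = UNIV"
  unfolding coin_def by simp_all

lemma borel_measurable_coin: "g \<in> borel_measurable (coin p)"
  unfolding coin_def by simp

lemma prob_space_coin_flips: "prob_space (coin_flips p)"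
  unfolding coin_flips_def by (intro prob_space_PiM prob_space_coin)

lemma space_coin_flips [simp]: "space (coin_flips p) = UNIV"
  unfolding coin_flips_def by (simp add: space_PiM PiE_UNIV_domain)

lemma measurable_coin_flips_component_coin:
  "(\<lambda>r. r t) \<in> measurable (coin_flips p) (coin p)"
  unfolding coin_flips_def by simp

lemma measurable_coin_flips_component [measurable]:
  "(\<lambda>r. r t) \<in> measurable (coin_flips p) (count_space UNIV)"
proof -
  note measurable_coin_flips_component_coin
  moreover have "sets (coin p) = sets (count_space UNIV)"
    by simp
  ultimately show ?thesis
    using measurable_cong_sets by blast
qed

lemma pred_coin_flips_heads [measurable]: "Measurable.pred (coin_flips p) (\<lambda>r. r t = 1)"
  using measurable_compose[OF measurable_coin_flips_component, of "\<lambda>a. a = (1::real)"] by simp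

lemma nn_integral_coin:
  assumes "0 \<le> p" "p \<le> 1"
  shows "(\<integral>\<^sup>+ a. h a \<partial>coin p) = ennreal p * h 1 + ennreal (1 - p) * h 0"
  unfolding coin_def using assms by (simp add: mult.commute)

lemma distr_coin_flips_component: "distr (coin_flips p) (coin p) (\<lambda>r. r t) = coin p"
  unfolding coin_flips_def by (intro distr_PiM_component prob_space_coin) auto

lemma distr_coin_flips_reindex:
  assumes "inj g"
  shows "distr (coin_flips p) (coin_flips p) (\<lambda>r. r \<circ> g) = coin_flips p"
proof -
  have "distr (coin_flips p) (coin_flips p) (\<lambda>r. \<lambda>m\<in>UNIV. r (g m)) = coin_flips p"
    unfolding coin_flips_def using assms prob_space_coin
    by (intro distr_PiM_reindex) (auto simp: inj_on_def)
  then show ?thesis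
    by (simp add: comp_def restrict_def)
qed

lemma indep_vars_coin_flips:
  "prob_space.indep_vars (coin_flips p) (\<lambda>_. coin p) (\<lambda>t r. r t) UNIV"
proof -
  interpret prob_space "coin_flips p" by (rule prob_space_coin_flips)
  have "distr (coin_flips p) (\<Pi>\<^sub>M t\<in>UNIV. coin p) (\<lambda>r. \<lambda>t\<in>UNIV. r t) = coin_flips p"
    unfolding coin_flips_def by (simp add: restrict_def distr_id2)
  moreover have "(\<Pi>\<^sub>M t\<in>UNIV. distr (coin_flips p) (coin p) (\<lambda>r. r t)) = coin_flips p"
    using distr_coin_flips_component[of p] by (simp add: coin_flips_def)
  ultimately show ?thesis
    by (subst indep_vars_iff_distr_eq_PiM) (auto simp: coin_flips_def)
qed

lemma prob_heads_frequency_ge: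
  assumes "0 \<le> p" "p \<le> 1" "0 \<le> d"
  shows "measure (coin_flips p) {r. (\<Sum>m<Suc k. of_bool (r m = 1)) / real (Suc k) \<ge> p + d}
           \<le> exp (- 2 * real (Suc k) * d\<^sup>2)"
proof -
  interpret prob_space "coin_flips p" by (rule prob_space_coin_flips)
  let ?X = "\<lambda>m r. of_bool (r m = 1) :: real"
  have distr_heads: "distr (coin_flips p) borel (?X m) = distr (coin p) borel (\<lambda>a. of_bool (a = 1))" for m
    by (subst distr_coin_flips_component[of p m, symmetric], subst distr_distr)
      (auto simp: comp_def intro: borel_measurable_coin measurable_coin_flips_component_coin)
  have "expectation (?X 0) = integral\<^sup>L (distr (coin_flips p) borel (?X 0)) (\<lambda>x. x)"
    by (subst integral_distr) auto
  also have "\<dots> = integral\<^sup>L (coin p) (\<lambda>a. of_bool (a = 1))"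
    unfolding distr_heads by (subst integral_distr) (auto simp: borel_measurable_coin)
  also have "\<dots> = p"
    unfolding coin_def using assms by simp
  finally have expectation_heads: "expectation (?X 0) = p" .
  interpret Hoeffding_ineq_iid "coin_flips p" "{..<Suc k}" ?X "?X 0" 0 1 p
  proof unfold_locales
    have "indep_vars (\<lambda>_. borel) (\<lambda>m r. (\<lambda>a. of_bool (a = 1) :: real) (r m)) UNIV"
      by (rule indep_vars_compose2[OF indep_vars_coin_flips borel_measurable_coin])
    then show "indep_vars (\<lambda>_. borel) ?X {..<Suc k}"
      by (rule indep_vars_subset) simp
    show "distr (coin_flips p) borel (?X m) = distr (coin_flips p) borel (?X 0)" for m
      unfolding distr_heads ..
    show "random_variable borel (?X 0)"
      by measurable
    show "AE r in coin_flips p. ?X 0 r \<in> {0..1}"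
      by simp
    show "p \<equiv> expectation (?X 0)"
      by (simp add: expectation_heads)
  qed simp
  show ?thesis
    using Hoeffding_ineq_ge'[OF assms(3) zero_less_one]
    by (simp only: space_coin_flips card_lessThan UNIV_I simp_thms diff_zero power_one div_by_1
        lessThan_empty_iff Zero_not_Suc)
qed

lemma AE_eventually_heads_less:
  assumes "0 \<le> p" "p \<le> 1" "p < \<theta>"
  shows "AE r in coin_flips p. \<forall>\<^sub>F k in sequentially. (\<Sum>m<k. of_bool (r m = 1)) < \<theta> * real k"
proof -
  interpret prob_space "coin_flips p" by (rule prob_space_coin_flips)
  define d where "d = \<theta> - p"
  define q where "q = exp (- 2 * d\<^sup>2)"
  define A where "A k = {r \<in> space (coin_flips p). (\<Sum>m<Suc k. of_bool (r m = 1)) / real (Suc k) \<ge> p + d}" for k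
  have "d > 0" "q < 1"
    using assms by (auto simp: d_def q_def)
  have A_sets: "A k \<in> events" for k
    unfolding A_def by measurable
  have prob_A: "prob (A k) \<le> q ^ Suc k" for k
  proof -
    have "prob (A k) \<le> exp (- 2 * real (Suc k) * d\<^sup>2)"
      using prob_heads_frequency_ge[OF assms(1,2), of d k] \<open>d > 0\<close>
      by (simp only: A_def space_coin_flips UNIV_I simp_thms less_imp_le)
    also have "\<dots> = q ^ Suc k"
      unfolding q_def by (subst exp_of_nat_mult[symmetric]) (simp add: algebra_simps)
    finally show ?thesis .
  qed
  have "summable (\<lambda>k. q ^ Suc k)"
    using \<open>q < 1\<close> by (simp add: q_def)
  then have "summable (\<lambda>k. prob (A k))"
    by (rule summable_comparison_test') (use prob_A in simp)
  then have "AE r in coin_flips p. \<forall>\<^sub>F k in sequentially. r \<notin> A k"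
    using borel_cantelli_AE1[OF A_sets] by (auto simp: emeasure_eq_measure)
  then show ?thesis
  proof (rule AE_mp[OF _ AE_I2], intro impI)
    fix r assume "\<forall>\<^sub>F k in sequentially. r \<notin> A k"
    then have "\<forall>\<^sub>F k in sequentially. (\<Sum>m<Suc k. of_bool (r m = 1)) < \<theta> * real (Suc k)"
      by eventually_elim (auto simp: A_def d_def not_le pos_divide_less_eq)
    then show "\<forall>\<^sub>F k in sequentially. (\<Sum>m<k. of_bool (r m = 1)) < \<theta> * real k"
      by (subst eventually_sequentially_Suc[symmetric])
  qed
qed

lemma AE_eventually_heads_less_reindex:
  assumes "0 \<le> p" "p \<le> 1" "p < \<theta>" "inj g"
  shows "AE r in coin_flips p. \<forall>\<^sub>F k in sequentially. (\<Sum>m<k. of_bool (r (g m) = 1)) < \<theta> * real k"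
proof -
  have "(\<lambda>r. r \<circ> g) \<in> measurable (coin_flips p) (coin_flips p)"
    unfolding coin_flips_def by (rule measurable_PiM_single') (auto simp: space_PiM)
  moreover have "AE r in distr (coin_flips p) (coin_flips p) (\<lambda>r. r \<circ> g).
      \<forall>\<^sub>F k in sequentially. (\<Sum>m<k. of_bool (r m = 1)) < \<theta> * real k"
    unfolding distr_coin_flips_reindex[OF assms(4)] by (rule AE_eventually_heads_less[OF assms(1-3)])
  ultimately show ?thesis
    by (auto dest: AE_distrD)
qed

section \<open>Randomized response is differentially private\<close>

definition flip_at :: "nat \<Rightarrow> (nat \<Rightarrow> real) \<Rightarrow> nat \<Rightarrow> real" where
  "flip_at t r = r(t := if r t = 1 then 0 else 1)"

lemma measurable_coin_flips_coin_iff: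
  "measurable (coin_flips p) (coin p) = measurable (coin_flips p) (count_space UNIV)"
  by (rule measurable_cong_sets) simp_all

lemma measurable_flip_at: "flip_at t \<in> measurable (coin_flips p) (coin_flips p)"
proof -
  have "(\<lambda>r. if s = t then if r t = 1 then 0 else 1 else r s) \<in> measurable (coin_flips p) (coin p)" for s
    unfolding measurable_coin_flips_coin_iff by measurable
  then show ?thesis
    by (subst (2) coin_flips_def, intro measurable_PiM_single') (auto simp: flip_at_def)
qed

lemma emeasure_coin_flips_split:
  fixes t :: nat and p :: real
  defines "R \<equiv> \<Pi>\<^sub>M s\<in>UNIV - {t}. coin p"
  assumes F: "F \<in> sets (coin_flips p)"
  shows "emeasure (coin_flips p) F = (\<integral>\<^sup>+ a. emeasure R {X \<in> space R. X(t := a) \<in> F} \<partial>coin p)"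
proof -
  interpret R: prob_space R
    unfolding R_def by (intro prob_space_PiM prob_space_coin)
  define \<Phi> where "\<Phi> = (\<lambda>aX :: real \<times> (nat \<Rightarrow> real). (snd aX)(t := fst aX))"
  have "distr (coin p \<Otimes>\<^sub>M R) (\<Pi>\<^sub>M s\<in>insert t (UNIV - {t}). coin p) (\<lambda>(a, X). X(t := a))
      = (\<Pi>\<^sub>M s\<in>insert t (UNIV - {t}). coin p)"
    unfolding R_def by (rule distr_pair_PiM_eq_PiM) (auto simp: prob_space_coin)
  moreover have "(\<lambda>(a, X). X(t := a)) = \<Phi>"
    unfolding \<Phi>_def by auto
  ultimately have distr_\<Phi>: "distr (coin p \<Otimes>\<^sub>M R) (coin_flips p) \<Phi> = coin_flips p"
    by (simp add: coin_flips_def)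
  have \<Phi>: "\<Phi> \<in> measurable (coin p \<Otimes>\<^sub>M R) (coin_flips p)"
    unfolding \<Phi>_def R_def coin_flips_def by (rule measurable_fun_upd[where J="UNIV - {t}"]) auto
  have "emeasure (coin_flips p) F = emeasure (coin p \<Otimes>\<^sub>M R) (\<Phi> -` F \<inter> space (coin p \<Otimes>\<^sub>M R))"
    by (subst distr_\<Phi>[symmetric], rule emeasure_distr[OF \<Phi>]) (simp add: F)
  also have "\<dots> = (\<integral>\<^sup>+ a. emeasure R (Pair a -` (\<Phi> -` F \<inter> space (coin p \<Otimes>\<^sub>M R))) \<partial>coin p)"
    by (rule R.emeasure_pair_measure_alt) (rule measurable_sets[OF \<Phi> F])
  also have "\<dots> = (\<integral>\<^sup>+ a. emeasure R {X \<in> space R. X(t := a) \<in> F} \<partial>coin p)"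
    by (intro nn_integral_cong arg_cong2[where f=emeasure] refl) (auto simp: \<Phi>_def space_pair_measure)
  finally show ?thesis .
qed

lemma measure_flip_at_vimage_le:
  assumes F: "F \<in> sets (coin_flips p)"
    and p: "0 \<le> p" "p \<le> 1" and c: "p \<le> c * (1 - p)" "1 - p \<le> c * p"
  shows "measure (coin_flips p) (flip_at t -` F) \<le> c * measure (coin_flips p) F"
proof -
  interpret prob_space "coin_flips p" by (rule prob_space_coin_flips)
  let ?R = "\<Pi>\<^sub>M s\<in>UNIV - {t}. coin p"
  define h where "h a = emeasure ?R {X \<in> space ?R. X(t := a) \<in> F}" for a
  have "1 \<le> c"
    using c by (simp add: algebra_simps)
  have flip_F: "flip_at t -` F \<in> events"
    using measurable_sets[OF measurable_flip_at F] by simp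
  have flip_upd: "flip_at t (X(t := a)) = X(t := if a = 1 then 0 else 1)" for X a
    by (simp add: flip_at_def)
  have "emeasure (coin_flips p) (flip_at t -` F) = ennreal p * h 0 + ennreal (1 - p) * h 1"
    unfolding emeasure_coin_flips_split[OF flip_F, of t] nn_integral_coin[OF p] h_def
    by (simp add: flip_upd)
  also have "\<dots> \<le> ennreal (c * (1 - p)) * h 0 + ennreal (c * p) * h 1"
    by (intro add_mono mult_right_mono ennreal_leI c) simp_all
  also have "\<dots> = ennreal c * (ennreal p * h 1 + ennreal (1 - p) * h 0)"
    using \<open>1 \<le> c\<close> p by (simp add: ennreal_mult distrib_left ac_simps)
  also have "ennreal p * h 1 + ennreal (1 - p) * h 0 = emeasure (coin_flips p) F"
    unfolding emeasure_coin_flips_split[OF F, of t] nn_integral_coin[OF p] h_def ..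
  finally show ?thesis
    using \<open>1 \<le> c\<close> by (simp add: emeasure_eq_measure ennreal_mult[symmetric] ennreal_le_iff)
qed

definition noisy_answers :: "(nat \<Rightarrow> 'a \<Rightarrow> bool) \<Rightarrow> 'a list \<Rightarrow> (nat \<Rightarrow> real) \<Rightarrow> bool list" where
  "noisy_answers q xs r = map (\<lambda>t. q t (xs ! t) \<noteq> (r t = 1)) [0..<length xs]"

lemma length_prefix [simp]: "length (prefix x n) = Suc n"
  unfolding prefix_def by simp

lemma nth_prefix: "t \<le> n \<Longrightarrow> prefix x n ! t = x t"
  unfolding prefix_def by (simp del: upt_Suc add: nth_map)

lemma length_noisy_answers [simp]: "length (noisy_answers q xs r) = length xs"
  unfolding noisy_answers_def by simp

lemma nth_noisy_answers:
  "t < length xs \<Longrightarrow> noisy_answers q xs r ! t = (q t (xs ! t) \<noteq> (r t = 1))"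
  unfolding noisy_answers_def by simp

lemma nth_noisy_answers_prefix:
  "t \<le> n \<Longrightarrow> noisy_answers q (prefix x n) r ! t = (q t (x t) \<noteq> (r t = 1))"
  by (simp add: nth_noisy_answers nth_prefix)

lemma measurable_noisy_answers:
  "(\<lambda>r. noisy_answers q xs r) \<in> measurable (coin_flips p) (count_space UNIV)"
proof (subst measurable_count_space_eq2_countable, intro conjI ballI)
  fix bs :: "bool list"
  have "noisy_answers q xs r = bs \<longleftrightarrow>
      length xs = length bs \<and> (\<forall>t<length xs. (q t (xs ! t) \<noteq> (r t = 1)) = bs ! t)" for r
    by (simp add: list_eq_iff_nth_eq[of "noisy_answers q xs r"] nth_noisy_answers)
  moreover have "Measurable.pred (coin_flips p)
      (\<lambda>r. length xs = length bs \<and> (\<forall>t<length xs. (q t (xs ! t) \<noteq> (r t = 1)) = bs ! t))"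
    by measurable
  ultimately show "(\<lambda>r. noisy_answers q xs r) -` {bs} \<inter> space (coin_flips p) \<in> sets (coin_flips p)"
    by (simp add: vimage_def pred_def)
qed simp

lemma noisy_answers_prefix_change_at:
  assumes "\<And>s. s \<noteq> t \<Longrightarrow> x s = x' s"
  shows "noisy_answers q (prefix x n) r
           = noisy_answers q (prefix x' n) (if q t (x t) = q t (x' t) then r else flip_at t r)"
  by (rule nth_equalityI) (auto simp: nth_noisy_answers_prefix less_Suc_eq_le flip_at_def assms)

theorem dp_continual_randomized_response:
  assumes "0 \<le> \<epsilon>"
  shows "dp_continual \<epsilon> (coin_flips (1 / (1 + exp \<epsilon>))) (\<lambda>xs r. f (noisy_answers q xs r))"
  unfolding dp_continual_def
proof (intro allI impI)
  fix x x' :: "nat \<Rightarrow> 'a" and E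
  assume "neighboring x x'" and E: "E \<in> sets out_space"
  then obtain t where t: "\<And>s. s \<noteq> t \<Longrightarrow> x s = x' s"
    unfolding neighboring_def by blast
  define p where "p = 1 / (1 + exp \<epsilon>)"
  let ?out = "output_seq (\<lambda>xs r. f (noisy_answers q xs r))"
  have out: "?out z \<in> measurable (coin_flips p) out_space" for z
    unfolding output_seq_def
    by (intro measurable_PiM_single' measurable_compose[OF measurable_noisy_answers]) auto
  have measure_out: "measure (distr (coin_flips p) out_space (?out z)) E = measure (coin_flips p) (?out z -` E)" for z
    by (subst measure_distr[OF out E]) simp
  have sets_out: "?out z -` E \<in> sets (coin_flips p)" for z
    using measurable_sets[OF out E] by simp
  have "1 \<le> exp \<epsilon>"
    using assms by simp
  have "0 < 1 + exp \<epsilon>"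
    by (simp add: add_pos_pos)
  then have p: "0 \<le> p" "p \<le> 1" "1 - p = exp \<epsilon> * p"
    by (simp_all add: p_def field_simps)
  moreover have "p \<le> exp \<epsilon> * p" "1 - p \<le> exp \<epsilon> * (1 - p)"
    using mult_right_mono[OF \<open>1 \<le> exp \<epsilon>\<close>] p(1,2) by simp_all
  ultimately have "1 - p \<le> exp \<epsilon> * p" "p \<le> exp \<epsilon> * (1 - p)"
    by linarith+
  have "measure (coin_flips p) (?out x -` E) \<le> exp \<epsilon> * measure (coin_flips p) (?out x' -` E)"
  proof (cases "q t (x t) = q t (x' t)")
    case True
    then have "?out x = ?out x'"
      using noisy_answers_prefix_change_at[where t=t and x=x and x'=x' and q=q, OF t]
      by (simp add: output_seq_def fun_eq_iff)
    then show ?thesis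
      using \<open>1 \<le> exp \<epsilon>\<close> by (simp add: mult_le_cancel_right1)
  next
    case False
    then have "?out x -` E = flip_at t -` (?out x' -` E)"
      using noisy_answers_prefix_change_at[where t=t and x=x and x'=x' and q=q, OF t]
      by (auto simp: output_seq_def)
    then show ?thesis
      using measure_flip_at_vimage_le[OF sets_out] \<open>p \<le> exp \<epsilon> * (1 - p)\<close> \<open>1 - p \<le> exp \<epsilon> * p\<close>
        \<open>0 \<le> p\<close> \<open>p \<le> 1\<close>
      by simp
  qed
  then show "measure (distr (coin_flips (1 / (1 + exp \<epsilon>))) out_space (?out x)) E
      \<le> exp \<epsilon> * measure (distr (coin_flips (1 / (1 + exp \<epsilon>))) out_space (?out x')) E"
    unfolding measure_out p_def[symmetric] .
qed

section \<open>Identification by noisy majority votes\<close>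

lemma strict_mono_prod_encode_right: "strict_mono (\<lambda>m. prod_encode (a, m))"
  by (rule strict_monoI_Suc) (simp add: prod_encode_def)

definition rounds :: "nat \<Rightarrow> nat \<Rightarrow> nat" where
  "rounds n a = (LEAST m. n \<le> prod_encode (a, m))"

lemma less_rounds_iff: "m < rounds n a \<longleftrightarrow> prod_encode (a, m) < n"
proof
  assume "m < rounds n a"
  then show "prod_encode (a, m) < n"
    unfolding rounds_def using not_less_Least not_le by blast
next
  have "n \<le> prod_encode (a, rounds n a)"
    unfolding rounds_def by (rule LeastI[of _ n]) (rule le_prod_encode_2)
  moreover assume "prod_encode (a, m) < n"
  ultimately have "prod_encode (a, m) < prod_encode (a, rounds n a)"
    by linarith
  then show "m < rounds n a"
    using strict_mono_less[OF strict_mono_prod_encode_right] by blast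
qed

lemma filterlim_rounds: "filterlim (\<lambda>n. rounds n a) at_top sequentially"
  unfolding filterlim_at_top
proof
  fix Z
  show "\<forall>\<^sub>F n in sequentially. Z \<le> rounds n a"
    using eventually_gt_at_top[of "prod_encode (a, Z)"]
    by eventually_elim (simp add: less_rounds_iff less_imp_le)
qed

lemma eventually_noisy_majority_of_true:
  assumes heads: "\<forall>\<^sub>F k in sequentially. (\<Sum>m<k. of_bool (c m)) < \<theta> * real k"
    and "\<theta> < 1/2"
  shows "\<forall>\<^sub>F k in sequentially. k < 2 * (\<Sum>m<k. of_bool (\<not> c m))"
  using heads eventually_gt_at_top[of 0]
proof eventually_elim
  case (elim k)
  have "(\<Sum>m<k. of_bool (\<not> c m)) + (\<Sum>m<k. of_bool (c m)) = (\<Sum>m<k. 1 :: nat)"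
    unfolding sum.distrib[symmetric] by (intro sum.cong) auto
  then have "real (\<Sum>m<k. of_bool (\<not> c m)) = real k - (\<Sum>m<k. of_bool (c m))"
    by (simp add: of_nat_eq_iff[symmetric] del: of_nat_eq_iff)
  moreover have "\<theta> * real k < real k / 2"
    using \<open>\<theta> < 1/2\<close> elim(2) by simp
  ultimately show ?case
    using elim(1) by linarith
qed

lemma eventually_noisy_majority_of_false:
  assumes heads: "\<forall>\<^sub>F k in sequentially. (\<Sum>m<k. of_bool (c m)) < \<theta> * real k"
    and "\<theta> < 1/2" and "finite {m. b m}"
  shows "\<forall>\<^sub>F k in sequentially. \<not> k < 2 * (\<Sum>m<k. of_bool (b m \<noteq> c m))"
proof -
  obtain N where N: "{m. b m} \<subseteq> {..<N}"
    using \<open>finite {m. b m}\<close> finite_nat_bounded by blast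
  have votes_le: "(\<Sum>m<k. of_bool (b m \<noteq> c m)) \<le> N + (\<Sum>m<k. of_bool (c m) :: nat)" for k
  proof -
    have "(\<Sum>m<k. of_bool (b m \<noteq> c m)) \<le> (\<Sum>m<k. of_bool (m < N) + of_bool (c m) :: nat)"
      using N by (intro sum_mono) auto
    also have "\<dots> \<le> N + (\<Sum>m<k. of_bool (c m))"
      using card_mono[of "{..<N}" "{..<k} \<inter> {m. m < N}"] by (simp add: sum.distrib subset_eq)
    finally show ?thesis .
  qed
  obtain K :: nat where K: "2 * real N / (1 - 2 * \<theta>) \<le> real K"
    using real_arch_simple by blast
  show ?thesis
    using heads eventually_ge_at_top[of K]
  proof eventually_elim
    case (elim k)
    have "2 * real N \<le> real K * (1 - 2 * \<theta>)"
      using K \<open>\<theta> < 1/2\<close> by (simp add: divide_le_eq)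
    also have "\<dots> \<le> real k * (1 - 2 * \<theta>)"
      using elim(2) \<open>\<theta> < 1/2\<close> by (intro mult_right_mono) simp_all
    finally have "2 * real N \<le> real k * (1 - 2 * \<theta>)" .
    then have "2 * (real N + (\<Sum>m<k. of_bool (c m))) \<le> real k"
      using elim(1) by (simp add: algebra_simps)
    then show ?case
      using votes_le[of k] by (simp add: not_less)
  qed
qed

definition yes_votes :: "bool list \<Rightarrow> nat \<Rightarrow> nat" where
  "yes_votes bs a = (\<Sum>m<rounds (length bs) a. of_bool (bs ! prod_encode (a, m)))"

definition accepts :: "bool list \<Rightarrow> nat \<Rightarrow> bool" where
  "accepts bs a \<longleftrightarrow> rounds (length bs) a < 2 * yes_votes bs a"

(* No a \<ge> length bs is accepted (it has had no round yet); the disjunct only bounds the search. *)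
definition majority_choice :: "bool list \<Rightarrow> nat" where
  "majority_choice bs = (LEAST a. accepts bs a \<or> a = length bs)"

definition membership_query :: "(nat \<Rightarrow> 'a set) \<Rightarrow> nat \<Rightarrow> 'a \<Rightarrow> bool" where
  "membership_query L t y \<longleftrightarrow> y \<in> L (fst (prod_decode t))"

lemma accepts_noisy_membership_prefix:
  "accepts (noisy_answers (membership_query L) (prefix x n) r) a \<longleftrightarrow>
     rounds (Suc n) a < 2 * (\<Sum>m<rounds (Suc n) a.
       of_bool ((x (prod_encode (a, m)) \<in> L a) \<noteq> (r (prod_encode (a, m)) = 1)))"
proof -
  have "prod_encode (a, m) \<le> n" if "m < rounds (Suc n) a" for m
    using that by (simp add: less_rounds_iff)
  then show ?thesis
    unfolding accepts_def yes_votes_def length_noisy_answers length_prefix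
    by (intro arg_cong2[where f="(<)"] arg_cong2[where f="(*)"] sum.cong refl)
      (simp add: nth_noisy_answers_prefix membership_query_def)
qed

lemma eventually_majority_choice_eq:
  assumes inter: "\<And>a b. a \<noteq> b \<Longrightarrow> finite (L a \<inter> L b)"
    and x: "enumeration_of x (L i)" and "\<theta> < 1/2"
    and heads: "\<And>a. \<forall>\<^sub>F k in sequentially. (\<Sum>m<k. of_bool (r (prod_encode (a, m)) = 1)) < \<theta> * real k"
  shows "\<forall>\<^sub>F n in sequentially. majority_choice (noisy_answers (membership_query L) (prefix x n) r) = i"
proof -
  let ?accepts = "\<lambda>n. accepts (noisy_answers (membership_query L) (prefix x n) r)"
  have "inj x" and range_x: "range x = L i"
    using x by (auto simp: enumeration_of_def)
  have in_L: "x t \<in> L i" for t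
    using range_x by blast
  have rounds_Suc: "filterlim (\<lambda>n. rounds (Suc n) a) at_top sequentially" for a
    using filterlim_rounds by (subst filterlim_sequentially_Suc)
  have "\<forall>\<^sub>F k in sequentially. k < 2 * (\<Sum>m<k. of_bool (\<not> r (prod_encode (i, m)) = 1))"
    by (rule eventually_noisy_majority_of_true[OF heads \<open>\<theta> < 1/2\<close>])
  from eventually_compose_filterlim[OF this rounds_Suc]
  have "\<forall>\<^sub>F n in sequentially. ?accepts n i"
    by (simp add: accepts_noisy_membership_prefix in_L)
  moreover have "\<forall>\<^sub>F n in sequentially. \<not> ?accepts n a" if "a \<noteq> i" for a
  proof -
    have "finite (x -` (L a \<inter> L i))"
      using inter[OF that] \<open>inj x\<close> by (intro finite_vimageI)
    then have "finite ((\<lambda>m. prod_encode (a, m)) -` (x -` (L a \<inter> L i)))"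
      by (rule finite_vimageI) (simp add: inj_on_def)
    then have "finite {m. x (prod_encode (a, m)) \<in> L a}"
      by (rule rev_finite_subset) (use range_x in auto)
    from eventually_compose_filterlim[OF eventually_noisy_majority_of_false[OF heads \<open>\<theta> < 1/2\<close> this]
        rounds_Suc]
    show ?thesis
      by (simp add: accepts_noisy_membership_prefix)
  qed
  ultimately have "\<forall>\<^sub>F n in sequentially. i < Suc n \<and> ?accepts n i \<and> (\<forall>a\<in>{..<i}. \<not> ?accepts n a)"
    by (intro eventually_conj eventually_ball_finite) (auto simp: eventually_gt_at_top)
  then show ?thesis
  proof eventually_elim
    case (elim n)
    then show ?case
      unfolding majority_choice_def length_noisy_answers length_prefix
      by (intro Least_equality) (auto simp: not_less[symmetric])
  qed
qed

theorem theoremD3: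
  fixes L :: "nat \<Rightarrow> 'a::countable set" and \<epsilon> :: real
  assumes infinite_langs: "\<And>a. infinite (L a)"
    and finite_inter: "\<And>a b. a \<noteq> b \<Longrightarrow> finite (L a \<inter> L b)"
    and eps_pos: "\<epsilon> > 0"
  shows "\<exists>(R :: (nat \<Rightarrow> real) measure) (A :: 'a list \<Rightarrow> (nat \<Rightarrow> real) \<Rightarrow> nat).
           online_randomized_alg R A \<and> dp_continual \<epsilon> R A \<and>
           (\<forall>K \<in> range L. \<forall>x. enumeration_of x K \<longrightarrow>
              (AE r in R. \<exists>i. L i = K \<and> (\<forall>\<^sub>F n in sequentially. A (prefix x n) r = i)))"
proof -
  define p where "p = 1 / (1 + exp \<epsilon>)"
  define \<theta> where "\<theta> = (p + 1/2) / 2"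
  let ?A = "\<lambda>xs r. majority_choice (noisy_answers (membership_query L) xs r)"
  have "1 < exp \<epsilon>"
    using eps_pos by simp
  then have "0 \<le> p" "p \<le> 1" "p < 1/2"
    unfolding p_def by (simp_all add: field_simps del: one_less_exp_iff)
  then have p: "0 \<le> p" "p \<le> 1" "p < \<theta>" "\<theta> < 1/2"
    by (simp_all add: \<theta>_def)
  have "online_randomized_alg (coin_flips p) ?A"
    unfolding online_randomized_alg_def
    by (auto intro: prob_space_coin_flips measurable_compose[OF measurable_noisy_answers])
  moreover have "dp_continual \<epsilon> (coin_flips p) ?A"
    unfolding p_def using eps_pos by (intro dp_continual_randomized_response) simp
  moreover have "AE r in coin_flips p. \<forall>a. \<forall>\<^sub>F k in sequentially.
      (\<Sum>m<k. of_bool (r (prod_encode (a, m)) = 1)) < \<theta> * real k"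
    unfolding AE_all_countable
    by (intro allI AE_eventually_heads_less_reindex p(1-3)) (simp add: inj_on_def)
  then have "\<forall>K \<in> range L. \<forall>x. enumeration_of x K \<longrightarrow>
      (AE r in coin_flips p. \<exists>i. L i = K \<and> (\<forall>\<^sub>F n in sequentially. ?A (prefix x n) r = i))"
    by (force elim!: AE_mp intro: eventually_majority_choice_eq[OF finite_inter _ p(4)])
  ultimately show ?thesis
    by blast
qed

end
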